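(* Consider an ontological model that reproduces the quantum predictions for a quantum system with Hilbert space $\mathbb{C}^3$, and suppose there is a constant $k$ such that $\omega_C(\mu_\psi,\mu_\phi)\geq k\,\omega_Q(\psi,\phi)$ for all pure states $\ket{\psi},\ket{\phi}$. Then $k\leq 0.95$. In particular, no maximally $\psi$-epistemic ontological model reproduces the quantum predictions for $d=3$.
   Context: An ontological model for a quantum system with Hilbert space $\mathbb{C}^d$ consists of: a measure space $\Lambda$ of "ontic states" (with measure $\mathrm{d}\lambda$); for every pure state $\ket{\psi}$, a probability density $\mu_\psi$ on $\Lambda$; and for every projective measurement $M$ with outcomes $f$ (corresponding to orthogonal projectors $P_f$ summing to the identity), response functions $\xi_M(f|\lambda)\geq 0$ with $\sum_f \xi_M(f|\lambda)=1$ for all $\lambda$. The model reproduces the quantum predictions if $\int_\Lambda \xi_M(f|\lambda)\mu_\psi(\lambda)\,\mathrm{d}\lambda = \bra{\psi}P_f\ket{\psi}$ for all pure states $\ket{\psi}$, all projective measurements $M$ and outcomes $f$. The classical overlap of densities $p,q$ is $\omega_C(p,q)=\int\min\{p(x),q(x)\}\,\mathrm{d}x$; the quantum overlap of pure states is $\omega_Q(\psi,\phi)=1-\sqrt{1-|\braket{\psi|\phi}|^2}$. The model is maximally $\psi$-epistemic if $\omega_C(\mu_\psi,\mu_\phi)=\omega_Q(\psi,\phi)$ for all pairs of pure states. *)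

theory Defs
  imports "HOL-Probability.Probability"
begin

definition braket :: "complex ^ 'n \<Rightarrow> complex ^ 'n \<Rightarrow> complex" where
  "braket \<psi> \<phi> = (\<Sum>i\<in>UNIV. cnj (\<psi> $ i) * \<phi> $ i)"

definition pure_state :: "complex ^ 'n \<Rightarrow> bool" where
  "pure_state \<psi> \<longleftrightarrow> braket \<psi> \<psi> = 1"

definition adjoint_mat :: "complex ^ 'n ^ 'n \<Rightarrow> complex ^ 'n ^ 'n" where
  "adjoint_mat P = (\<chi> i j. cnj (P $ j $ i))"

definition orth_projector :: "complex ^ 'n ^ 'n \<Rightarrow> bool" where
  "orth_projector P \<longleftrightarrow> adjoint_mat P = P \<and> P ** P = P"

definition projective_measurement :: "(complex ^ 'n ^ 'n) list \<Rightarrow> bool" where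
  "projective_measurement Ps \<longleftrightarrow>
     (\<forall>f < length Ps. orth_projector (Ps ! f)) \<and>
     (\<forall>f < length Ps. \<forall>g < length Ps. f \<noteq> g \<longrightarrow> Ps ! f ** Ps ! g = 0) \<and>
     sum_list Ps = mat 1"

definition born :: "complex ^ 'n \<Rightarrow> complex ^ 'n ^ 'n \<Rightarrow> real" where
  "born \<psi> P = Re (braket \<psi> (P *v \<psi>))"

definition reproducing_ontological_model ::
  "'l measure \<Rightarrow> (complex ^ 'n \<Rightarrow> 'l \<Rightarrow> real) \<Rightarrow>
   ((complex ^ 'n ^ 'n) list \<Rightarrow> nat \<Rightarrow> 'l \<Rightarrow> real) \<Rightarrow> bool" where
  "reproducing_ontological_model M \<mu> \<xi> \<longleftrightarrow>
     (\<forall>\<psi>. pure_state \<psi> \<longrightarrow>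
        \<mu> \<psi> \<in> borel_measurable M \<and> (\<forall>l\<in>space M. 0 \<le> \<mu> \<psi> l) \<and>
        integrable M (\<mu> \<psi>) \<and> (\<integral>l. \<mu> \<psi> l \<partial>M) = 1) \<and>
     (\<forall>Ps. projective_measurement Ps \<longrightarrow>
        (\<forall>f < length Ps. \<xi> Ps f \<in> borel_measurable M \<and> (\<forall>l\<in>space M. 0 \<le> \<xi> Ps f l)) \<and>
        (\<forall>l\<in>space M. (\<Sum>f<length Ps. \<xi> Ps f l) = 1)) \<and>
     (\<forall>\<psi> Ps f. pure_state \<psi> \<longrightarrow> projective_measurement Ps \<longrightarrow> f < length Ps \<longrightarrow>
        (\<integral>l. \<xi> Ps f l * \<mu> \<psi> l \<partial>M) = born \<psi> (Ps ! f))"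

definition classical_overlap :: "'l measure \<Rightarrow> ('l \<Rightarrow> real) \<Rightarrow> ('l \<Rightarrow> real) \<Rightarrow> real" where
  "classical_overlap M p q = (\<integral>x. min (p x) (q x) \<partial>M)"

definition quantum_overlap :: "complex ^ 'n \<Rightarrow> complex ^ 'n \<Rightarrow> real" where
  "quantum_overlap \<psi> \<phi> = 1 - sqrt (1 - (cmod (braket \<psi> \<phi>))\<^sup>2)"

definition maximally_psi_epistemic ::
  "'l measure \<Rightarrow> (complex ^ 'n \<Rightarrow> 'l \<Rightarrow> real) \<Rightarrow> bool" where
  "maximally_psi_epistemic M \<mu> \<longleftrightarrow>
     (\<forall>\<psi> \<phi>. pure_state \<psi> \<longrightarrow> pure_state \<phi> \<longrightarrow>
        classical_overlap M (\<mu> \<psi>) (\<mu> \<phi>) = quantum_overlap \<psi> \<phi>)"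

end

theory Submission
  imports Defs
begin

text \<open>Take the nine states \<open>s\<^sub>t\<close> of the Hesse SIC in \<open>\<complex>\<^sup>3\<close> and the four mutually
  unbiased bases of \<open>\<complex>\<^sup>3\<close>: every basis vector is orthogonal to exactly three of the
  states, and for any two states \<open>s\<^sub>j, s\<^sub>k\<close> other than \<open>s\<^sub>0\<close> one of the bases has each of
  its vectors orthogonal to one of \<open>s\<^sub>0, s\<^sub>j, s\<^sub>k\<close>. Measuring that basis, the outcome at an
  ontic state \<open>\<lambda>\<close> has probability zero for one of the three states, so almost every \<open>\<lambda>\<close>
  lies outside the support of one of \<open>\<mu>\<^sub>0, \<mu>\<^sub>j, \<mu>\<^sub>k\<close>. Hence almost everywhere at most one of
  the functions \<open>min \<mu>\<^sub>0 \<mu>\<^sub>j\<close> (\<open>j = 1..8\<close>) is nonzero, and the eight classical overlaps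
  with \<open>\<mu>\<^sub>0\<close> sum to at most \<open>\<integral> \<mu>\<^sub>0 = 1\<close>. Each quantum overlap is \<open>1 - \<surd>3/2\<close>, so
  \<open>8 k (1 - \<surd>3/2) \<le> 1\<close>, i.e. \<open>k \<le> 0.933\<dots>\<close>.\<close>

lemma response_le_1:
  assumes model: "reproducing_ontological_model M \<mu> \<xi>"
    and Ps: "projective_measurement Ps" and f: "f < length Ps" and l: "l \<in> space M"
  shows "\<xi> Ps f l \<le> 1"
proof -
  have "\<xi> Ps f l \<le> (\<Sum>g<length Ps. \<xi> Ps g l)"
    using model Ps f l unfolding reproducing_ontological_model_def
    by (intro member_le_sum) auto
  also have "\<dots> = 1"
    using model Ps l unfolding reproducing_ontological_model_def by auto
  finally show ?thesis .
qed

lemma integrable_response_density: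
  assumes model: "reproducing_ontological_model M \<mu> \<xi>"
    and \<psi>: "pure_state \<psi>" and Ps: "projective_measurement Ps" and f: "f < length Ps"
  shows "integrable M (\<lambda>l. \<xi> Ps f l * \<mu> \<psi> l)"
proof (rule Bochner_Integration.integrable_bound)
  show "integrable M (\<mu> \<psi>)"
    using model \<psi> unfolding reproducing_ontological_model_def by auto
  show "(\<lambda>l. \<xi> Ps f l * \<mu> \<psi> l) \<in> borel_measurable M"
    using model \<psi> Ps f unfolding reproducing_ontological_model_def
    by (intro borel_measurable_times) auto
  show "AE l in M. norm (\<xi> Ps f l * \<mu> \<psi> l) \<le> norm (\<mu> \<psi> l)"
  proof (rule AE_I2)
    fix l assume l: "l \<in> space M"
    have "0 \<le> \<xi> Ps f l" "0 \<le> \<mu> \<psi> l"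
      using model \<psi> Ps f l unfolding reproducing_ontological_model_def by auto
    with response_le_1[OF model Ps f l]
    show "norm (\<xi> Ps f l * \<mu> \<psi> l) \<le> norm (\<mu> \<psi> l)"
      by (simp add: abs_mult mult_left_le_one_le)
  qed
qed

lemma AE_response_density_eq_0:
  assumes model: "reproducing_ontological_model M \<mu> \<xi>"
    and \<psi>: "pure_state \<psi>" and Ps: "projective_measurement Ps" and f: "f < length Ps"
    and born: "born \<psi> (Ps ! f) = 0"
  shows "AE l in M. \<xi> Ps f l * \<mu> \<psi> l = 0"
proof -
  have "(\<integral>l. \<xi> Ps f l * \<mu> \<psi> l \<partial>M) = 0"
    using model \<psi> Ps f born unfolding reproducing_ontological_model_def by auto
  moreover have "AE l in M. 0 \<le> \<xi> Ps f l * \<mu> \<psi> l"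
    using model \<psi> Ps f unfolding reproducing_ontological_model_def by (auto intro!: AE_I2)
  ultimately show ?thesis
    using integral_nonneg_eq_0_iff_AE[OF integrable_response_density[OF model \<psi> Ps f]] by simp
qed

text \<open>Some outcome \<open>f\<close> has \<open>\<xi> Ps f l \<noteq> 0\<close>; the state excluding \<open>f\<close> must vanish at \<open>l\<close>.\<close>
lemma AE_ex_density_eq_0:
  assumes model: "reproducing_ontological_model M \<mu> \<xi>"
    and Ps: "projective_measurement Ps"
    and excl: "\<And>f. f < length Ps \<Longrightarrow> \<exists>\<psi>\<in>S. pure_state \<psi> \<and> born \<psi> (Ps ! f) = 0"
  shows "AE l in M. \<exists>\<psi>\<in>S. \<mu> \<psi> l = 0"
proof -
  obtain \<psi> where \<psi>: "\<And>f. f < length Ps \<Longrightarrow> \<psi> f \<in> S \<and> pure_state (\<psi> f) \<and> born (\<psi> f) (Ps ! f) = 0"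
    using excl by metis
  have "AE l in M. \<forall>f\<in>{..<length Ps}. \<xi> Ps f l * \<mu> (\<psi> f) l = 0"
    using \<psi> by (intro AE_finite_allI AE_response_density_eq_0[OF model _ Ps]) auto
  with AE_space show ?thesis
  proof eventually_elim
    case (elim l)
    note l = elim(1) and zero = elim(2)
    have "(\<Sum>f<length Ps. \<xi> Ps f l) = 1"
      using model Ps l unfolding reproducing_ontological_model_def by auto
    then obtain f where f: "f < length Ps" "\<xi> Ps f l \<noteq> 0"
      by (metis lessThan_iff sum.neutral zero_neq_one)
    then show "\<exists>\<psi>\<in>S. \<mu> \<psi> l = 0"
      using \<psi>[OF f(1)] zero by auto
  qed
qed

lemma sum_min_le_of_pairwise_zero:
  fixes a :: real and c :: "'a \<Rightarrow> real"
  assumes "finite J" "0 \<le> a" "\<And>j. j \<in> J \<Longrightarrow> 0 \<le> c j"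
    and pairwise: "\<And>j k. j \<in> J \<Longrightarrow> k \<in> J \<Longrightarrow> j \<noteq> k \<Longrightarrow> a = 0 \<or> c j = 0 \<or> c k = 0"
  shows "(\<Sum>j\<in>J. min a (c j)) \<le> a"
proof (cases "\<exists>j\<in>J. a \<noteq> 0 \<and> c j \<noteq> 0")
  case True
  then obtain j where j: "j \<in> J" "a \<noteq> 0" "c j \<noteq> 0" by auto
  have "(\<Sum>k\<in>J. min a (c k)) = min a (c j) + (\<Sum>k\<in>J - {j}. min a (c k))"
    using j assms(1) by (simp add: sum.remove)
  also have "(\<Sum>k\<in>J - {j}. min a (c k)) = 0"
    using pairwise[OF j(1)] j assms(2) by (intro sum.neutral) (auto simp: min_def)
  finally show ?thesis by simp
next
  case False
  then have "(\<Sum>j\<in>J. min a (c j)) = 0"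
    using assms(2,3) by (intro sum.neutral) (auto simp: min_def)
  then show ?thesis using assms(2) by simp
qed

lemma sum_classical_overlap_le_1:
  assumes model: "reproducing_ontological_model M \<mu> \<xi>"
    and \<psi>: "pure_state \<psi>" and J: "finite J" and \<phi>: "\<And>j. j \<in> J \<Longrightarrow> pure_state (\<phi> j)"
    and pairwise: "AE l in M. \<forall>j\<in>J. \<forall>k\<in>J. j \<noteq> k \<longrightarrow>
                     \<mu> \<psi> l = 0 \<or> \<mu> (\<phi> j) l = 0 \<or> \<mu> (\<phi> k) l = 0"
  shows "(\<Sum>j\<in>J. classical_overlap M (\<mu> \<psi>) (\<mu> (\<phi> j))) \<le> 1"
proof -
  have density: "integrable M (\<mu> \<rho>)" "\<And>l. l \<in> space M \<Longrightarrow> 0 \<le> \<mu> \<rho> l"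
    if "pure_state \<rho>" for \<rho>
    using model that unfolding reproducing_ontological_model_def by auto
  have min_int: "integrable M (\<lambda>l. min (\<mu> \<psi> l) (\<mu> (\<phi> j) l))" if "j \<in> J" for j
    using density(1)[OF \<psi>] density(1)[OF \<phi>[OF that]] by (rule integrable_min)
  have "(\<Sum>j\<in>J. classical_overlap M (\<mu> \<psi>) (\<mu> (\<phi> j)))
      = (\<integral>l. (\<Sum>j\<in>J. min (\<mu> \<psi> l) (\<mu> (\<phi> j) l)) \<partial>M)"
    unfolding classical_overlap_def using min_int by (simp add: Bochner_Integration.integral_sum)
  also have "\<dots> \<le> (\<integral>l. \<mu> \<psi> l \<partial>M)"
  proof (rule integral_mono_AE)
    show "AE l in M. (\<Sum>j\<in>J. min (\<mu> \<psi> l) (\<mu> (\<phi> j) l)) \<le> \<mu> \<psi> l"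
      using AE_space pairwise
    proof eventually_elim
      case (elim l)
      then show "(\<Sum>j\<in>J. min (\<mu> \<psi> l) (\<mu> (\<phi> j) l)) \<le> \<mu> \<psi> l"
        using density(2)[OF \<psi>] density(2)[OF \<phi>] J
        by (intro sum_min_le_of_pairwise_zero) auto
    qed
  qed (use min_int density(1)[OF \<psi>] in auto)
  also have "\<dots> = 1"
    using model \<psi> unfolding reproducing_ontological_model_def by auto
  finally show ?thesis .
qed

definition outer_proj :: "real \<Rightarrow> complex ^ 'n \<Rightarrow> complex ^ 'n ^ 'n" where
  "outer_proj c v = (\<chi> i j. of_real c * v $ i * cnj (v $ j))"

lemma braket_scale_right: "braket u (d *s v) = d * braket u v"
  unfolding braket_def by (simp add: sum_distrib_left mult_ac)

lemma braket_scale: "braket (c *s u) (d *s v) = cnj c * d * braket u v"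
  unfolding braket_def by (simp add: sum_distrib_left mult_ac)

lemma outer_proj_mult:
  "outer_proj c u ** outer_proj d v = (\<chi> i j. of_real c * of_real d * u $ i * cnj (v $ j) * braket u v)"
  unfolding outer_proj_def matrix_matrix_mult_def braket_def vec_eq_iff
  by (simp add: sum_distrib_left mult_ac)

lemma outer_proj_mult_orth: "braket u v = 0 \<Longrightarrow> outer_proj c u ** outer_proj d v = 0"
  by (simp add: outer_proj_mult vec_eq_iff)

lemma orth_projector_outer_proj:
  assumes "of_real c * braket v v = 1"
  shows "orth_projector (outer_proj c v)"
  unfolding orth_projector_def
proof
  show "adjoint_mat (outer_proj c v) = outer_proj c v"
    by (simp add: adjoint_mat_def outer_proj_def vec_eq_iff mult_ac)
  have "of_real c * of_real c * v $ i * cnj (v $ j) * braket v v = of_real c * v $ i * cnj (v $ j)" for i j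
    using assms by (metis mult.assoc mult.commute mult_1)
  then show "outer_proj c v ** outer_proj c v = outer_proj c v"
    unfolding outer_proj_mult by (simp add: outer_proj_def vec_eq_iff)
qed

lemma born_outer_proj_orth:
  assumes "braket v \<psi> = 0"
  shows "born \<psi> (outer_proj c v) = 0"
proof -
  have "(outer_proj c v *v \<psi>) $ i = of_real c * v $ i * braket v \<psi>" for i
    unfolding outer_proj_def matrix_vector_mult_def braket_def
    by (simp add: sum_distrib_left mult_ac)
  then have "outer_proj c v *v \<psi> = 0"
    using assms by (simp add: vec_eq_iff)
  then show ?thesis
    by (simp add: born_def braket_def)
qed

definition omega :: complex where "omega = Complex (-1/2) (sqrt 3 / 2)"

lemma omega_simps:
  "omega * omega = cnj omega" "cnj omega * cnj omega = omega"
  "omega * cnj omega = 1" "cnj omega * omega = 1" "1 + omega + cnj omega = 0"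
  by (simp_all add: omega_def complex_eq_iff field_simps)

lemma braket_3: "braket (u :: complex ^ 3) v = cnj (u$1) * v$1 + cnj (u$2) * v$2 + cnj (u$3) * v$3"
  by (simp add: braket_def sum_3)

definition sic_vec :: "(complex ^ 3) list" where
  "sic_vec = [vector [0, 1, -1], vector [0, 1, -omega], vector [0, 1, - cnj omega],
              vector [-1, 0, 1], vector [-omega, 0, 1], vector [- cnj omega, 0, 1],
              vector [1, -1, 0], vector [1, -omega, 0], vector [1, - cnj omega, 0]]"

definition sic_state :: "nat \<Rightarrow> complex ^ 3" where
  "sic_state t = of_real (1 / sqrt 2) *s (sic_vec ! t)"

definition mub_vec :: "(complex ^ 3) list list" where
  "mub_vec = [[vector [1, 0, 0], vector [0, 1, 0], vector [0, 0, 1]],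
              [vector [1, 1, 1], vector [1, omega, cnj omega], vector [1, cnj omega, omega]],
              [vector [1, 1, omega], vector [1, omega, 1], vector [1, cnj omega, cnj omega]],
              [vector [1, 1, cnj omega], vector [1, omega, omega], vector [1, cnj omega, 1]]]"

definition mub_scale :: "nat \<Rightarrow> real" where
  "mub_scale B = (if B = 0 then 1 else 1/3)"

definition mub_measurement :: "nat \<Rightarrow> (complex ^ 3 ^ 3) list" where
  "mub_measurement B = map (outer_proj (mub_scale B)) (mub_vec ! B)"

text \<open>\<open>sic_orth B f\<close> lists the three indices \<open>t\<close> for which \<open>sic_vec ! t\<close> is orthogonal
  to \<open>mub_vec ! B ! f\<close>.\<close>
definition sic_orth :: "nat list list list" where
  "sic_orth = [[[0,1,2], [3,4,5], [6,7,8]], [[0,3,6], [1,4,7], [2,5,8]],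
               [[1,5,6], [2,3,7], [0,4,8]], [[2,4,6], [0,5,7], [1,3,8]]]"

lemma less_4_cases: "(B :: nat) < 4 \<longleftrightarrow> B = 0 \<or> B = 1 \<or> B = 2 \<or> B = 3"
  by auto

lemma less_3_cases: "(f :: nat) < 3 \<longleftrightarrow> f = 0 \<or> f = 1 \<or> f = 2"
  by auto

lemma less_9_cases: "(t :: nat) < 9 \<longleftrightarrow> t = 0 \<or> t = 1 \<or> t = 2 \<or> t = 3 \<or> t = 4 \<or> t = 5 \<or> t = 6 \<or> t = 7 \<or> t = 8"
  by auto

lemma sic_state_pure: "t < 9 \<Longrightarrow> pure_state (sic_state t)"
proof -
  assume "t < 9"
  then have "braket (sic_vec ! t) (sic_vec ! t) = 2"
    unfolding less_9_cases by (elim disjE) (simp_all add: sic_vec_def braket_3 omega_simps)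
  moreover have "(1 / complex_of_real (sqrt 2)) ^ 2 = 1 / 2"
    by (simp add: power_divide flip: of_real_power)
  ultimately show ?thesis
    unfolding pure_state_def sic_state_def braket_scale by (simp add: power2_eq_square)
qed

lemma quantum_overlap_sic_state:
  assumes "j \<in> {1..8}"
  shows "quantum_overlap (sic_state 0) (sic_state j) = 1 - sqrt 3 / 2"
proof -
  have "j \<in> {1, 2, 3, 4, 5, 6, 7, 8}"
    using assms by auto
  then have unit: "(cmod (braket (sic_vec ! 0) (sic_vec ! j)))\<^sup>2 = 1"
    by (auto simp: sic_vec_def braket_3 omega_def cmod_power2 power_divide)
  have scale: "braket (sic_state 0) (sic_state j) = of_real (1/2) * braket (sic_vec ! 0) (sic_vec ! j)"
    unfolding sic_state_def braket_scale by (simp flip: of_real_mult)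
  have "(cmod (braket (sic_state 0) (sic_state j)))\<^sup>2 = (1/2)\<^sup>2 * (cmod (braket (sic_vec ! 0) (sic_vec ! j)))\<^sup>2"
    unfolding scale norm_mult norm_of_real power_mult_distrib by simp
  then have "(cmod (braket (sic_state 0) (sic_state j)))\<^sup>2 = 1/4"
    unfolding unit by (simp add: power_divide)
  then have "quantum_overlap (sic_state 0) (sic_state j) = 1 - sqrt (3/4)"
    unfolding quantum_overlap_def by simp
  also have "sqrt (3/4) = sqrt 3 / 2"
    by (simp add: real_sqrt_divide)
  finally show ?thesis .
qed

lemma length_mub_vec: "B < 4 \<Longrightarrow> length (mub_vec ! B) = 3"
  unfolding less_4_cases by (auto simp: mub_vec_def)

lemma length_mub_measurement: "B < 4 \<Longrightarrow> length (mub_measurement B) = 3"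
  by (simp add: mub_measurement_def length_mub_vec)

lemma mub_measurement_nth:
  "B < 4 \<Longrightarrow> f < 3 \<Longrightarrow> mub_measurement B ! f = outer_proj (mub_scale B) (mub_vec ! B ! f)"
  by (simp add: mub_measurement_def length_mub_vec)

lemma mub_vec_normalized:
  "B < 4 \<Longrightarrow> f < 3 \<Longrightarrow> of_real (mub_scale B) * braket (mub_vec ! B ! f) (mub_vec ! B ! f) = 1"
  unfolding less_4_cases less_3_cases
  by (elim disjE) (simp_all add: mub_vec_def mub_scale_def braket_3 omega_simps)

lemma mub_vec_orth:
  "B < 4 \<Longrightarrow> f < 3 \<Longrightarrow> g < 3 \<Longrightarrow> f \<noteq> g \<Longrightarrow> braket (mub_vec ! B ! f) (mub_vec ! B ! g) = 0"
  unfolding less_4_cases less_3_cases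
  apply (elim disjE)
  apply (simp_all add: mub_vec_def braket_3 omega_simps)
  apply (simp_all add: omega_def complex_eq_iff)
  done

lemma sum_list_mub_measurement: "B < 4 \<Longrightarrow> sum_list (mub_measurement B) = mat 1"
  unfolding less_4_cases
  apply (elim disjE)
  apply (simp_all add: mub_measurement_def mub_vec_def mub_scale_def outer_proj_def mat_def
      vec_eq_iff forall_3 omega_simps)
  apply (simp_all add: omega_def complex_eq_iff)
  done

lemma projective_measurement_mub: "B < 4 \<Longrightarrow> projective_measurement (mub_measurement B)"
  unfolding projective_measurement_def
  by (auto simp: length_mub_measurement mub_measurement_nth sum_list_mub_measurement
      intro!: orth_projector_outer_proj mub_vec_normalized outer_proj_mult_orth mub_vec_orth)

lemma born_sic_state_mub:
  assumes "B < 4" "f < 3" "t \<in> set (sic_orth ! B ! f)"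
  shows "born (sic_state t) (mub_measurement B ! f) = 0"
proof -
  have "braket (mub_vec ! B ! f) (sic_vec ! t) = 0"
    using assms unfolding less_4_cases less_3_cases
    by (elim disjE) (auto simp: sic_orth_def mub_vec_def sic_vec_def braket_3 omega_simps)
  then show ?thesis
    unfolding mub_measurement_nth[OF assms(1,2)] sic_state_def
    by (simp add: born_outer_proj_orth braket_scale_right)
qed

lemma sic_orth_less_9: "B < 4 \<Longrightarrow> f < 3 \<Longrightarrow> t \<in> set (sic_orth ! B ! f) \<Longrightarrow> t < 9"
  unfolding less_4_cases less_3_cases by (elim disjE) (auto simp: sic_orth_def)

lemma sic_orth_covers_pair:
  assumes "j \<in> {1..8}" "k \<in> {1..8}" "j \<noteq> k"
  shows "\<exists>B<4. \<forall>f<3. \<exists>t\<in>{0, j, k}. t \<in> set (sic_orth ! B ! f)"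
proof -
  have "j \<in> {1, 2, 3, 4, 5, 6, 7, 8}" "k \<in> {1, 2, 3, 4, 5, 6, 7, 8}"
    using assms by auto
  then show ?thesis
    using assms(3)
    by (simp add: sic_orth_def numeral_eq_Suc Ex_less_Suc2 All_less_Suc2) (elim disjE; simp)
qed

lemma AE_sic_state_pairwise_density_eq_0:
  assumes model: "reproducing_ontological_model M \<mu> \<xi>"
  shows "AE l in M. \<forall>j\<in>{1..8}. \<forall>k\<in>{1..8}. j \<noteq> k \<longrightarrow>
           \<mu> (sic_state 0) l = 0 \<or> \<mu> (sic_state j) l = 0 \<or> \<mu> (sic_state k) l = 0"
proof (intro AE_finite_allI finite_atLeastAtMost)
  fix j k :: nat assume j: "j \<in> {1..8}" and k: "k \<in> {1..8}"
  have "AE l in M. \<exists>\<psi>\<in>{sic_state 0, sic_state j, sic_state k}. \<mu> \<psi> l = 0" if jk: "j \<noteq> k"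
  proof -
    obtain B where B: "B < 4" "\<forall>f<3. \<exists>t\<in>{0, j, k}. t \<in> set (sic_orth ! B ! f)"
      using sic_orth_covers_pair[OF j k jk] by blast
    show ?thesis
    proof (rule AE_ex_density_eq_0[OF model projective_measurement_mub[OF B(1)]])
      fix f assume "f < length (mub_measurement B)"
      then have f: "f < 3"
        using length_mub_measurement[OF B(1)] by simp
      then obtain t where "t \<in> {0, j, k}" "t \<in> set (sic_orth ! B ! f)"
        using B(2) by blast
      then show "\<exists>\<psi>\<in>{sic_state 0, sic_state j, sic_state k}.
                   pure_state \<psi> \<and> born \<psi> (mub_measurement B ! f) = 0"
        using sic_state_pure sic_orth_less_9 born_sic_state_mub B(1) f by blast
    qed
  qed
  then show "AE l in M. j \<noteq> k \<longrightarrow>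
               \<mu> (sic_state 0) l = 0 \<or> \<mu> (sic_state j) l = 0 \<or> \<mu> (sic_state k) l = 0"
    by (cases "j = k") (auto elim!: eventually_mono)
qed

lemma sum_classical_overlap_sic_state_le_1:
  assumes model: "reproducing_ontological_model M \<mu> \<xi>"
  shows "(\<Sum>j\<in>{1..8}. classical_overlap M (\<mu> (sic_state 0)) (\<mu> (sic_state j))) \<le> 1"
  by (intro sum_classical_overlap_le_1[OF model] sic_state_pure
      AE_sic_state_pairwise_density_eq_0[OF model]) auto

lemma le_95_100_of_sic_overlap_bound:
  fixes k :: real
  assumes "8 * (k * (1 - sqrt 3 / 2)) \<le> 1"
  shows "k \<le> 95 / 100"
proof -
  have "sqrt 3 < 17321 / 10000"
    by (rule real_less_lsqrt) (auto simp: power2_eq_square)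
  then have gap: "2679 / 20000 < 1 - sqrt 3 / 2"
    by simp
  show ?thesis
  proof (rule ccontr)
    define g where "g = 1 - sqrt 3 / 2"
    assume "\<not> k \<le> 95 / 100"
    then have "95 / 100 * g \<le> k * g"
      using gap unfolding g_def by (intro mult_right_mono) auto
    then show False
      using assms gap unfolding g_def[symmetric] by linarith
  qed
qed

lemma overlap_ratio_le_95_100:
  fixes \<mu> :: "complex ^ 3 \<Rightarrow> 'l \<Rightarrow> real"
  assumes model: "reproducing_ontological_model M \<mu> \<xi>"
    and k: "\<forall>\<psi> \<phi>. pure_state \<psi> \<longrightarrow> pure_state \<phi> \<longrightarrow>
              classical_overlap M (\<mu> \<psi>) (\<mu> \<phi>) \<ge> k * quantum_overlap \<psi> \<phi>"
  shows "k \<le> 95 / 100"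
proof (rule le_95_100_of_sic_overlap_bound)
  have "(\<Sum>j\<in>{1..8::nat}. k * (1 - sqrt 3 / 2))
      \<le> (\<Sum>j\<in>{1..8}. classical_overlap M (\<mu> (sic_state 0)) (\<mu> (sic_state j)))"
  proof (rule sum_mono)
    fix j :: nat assume j: "j \<in> {1..8}"
    then have "pure_state (sic_state j)"
      by (intro sic_state_pure) auto
    then have "k * quantum_overlap (sic_state 0) (sic_state j)
        \<le> classical_overlap M (\<mu> (sic_state 0)) (\<mu> (sic_state j))"
      using k sic_state_pure[of 0] by simp
    then show "k * (1 - sqrt 3 / 2) \<le> classical_overlap M (\<mu> (sic_state 0)) (\<mu> (sic_state j))"
      unfolding quantum_overlap_sic_state[OF j] .
  qed
  also have "\<dots> \<le> 1"
    using model by (rule sum_classical_overlap_sic_state_le_1)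
  finally show "8 * (k * (1 - sqrt 3 / 2)) \<le> 1"
    by simp
qed

theorem mainTheorem3:
  fixes M :: "'l measure"
    and \<mu> :: "complex ^ 3 \<Rightarrow> 'l \<Rightarrow> real"
    and \<xi> :: "(complex ^ 3 ^ 3) list \<Rightarrow> nat \<Rightarrow> 'l \<Rightarrow> real"
  assumes "reproducing_ontological_model M \<mu> \<xi>"
  shows "(\<forall>k::real. (\<forall>\<psi> \<phi>. pure_state \<psi> \<longrightarrow> pure_state \<phi> \<longrightarrow>
              classical_overlap M (\<mu> \<psi>) (\<mu> \<phi>) \<ge> k * quantum_overlap \<psi> \<phi>)
           \<longrightarrow> k \<le> 95 / 100)
         \<and> \<not> maximally_psi_epistemic M \<mu>"
proof -
  have bound: "k \<le> 95 / 100"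
    if "\<forall>\<psi> \<phi>. pure_state \<psi> \<longrightarrow> pure_state \<phi> \<longrightarrow>
          classical_overlap M (\<mu> \<psi>) (\<mu> \<phi>) \<ge> k * quantum_overlap \<psi> \<phi>" for k :: real
    using assms that by (rule overlap_ratio_le_95_100)
  moreover have "\<not> maximally_psi_epistemic M \<mu>"
  proof
    assume "maximally_psi_epistemic M \<mu>"
    then have "(1::real) \<le> 95 / 100"
      by (intro bound) (simp add: maximally_psi_epistemic_def)
    then show False
      by simp
  qed
  ultimately show ?thesis
    by blast
qed

end
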